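(* For every positive integer $m$ and prime power $q$, $\sigma(Sp_{2m}(q))=\sigma(S_{2m}(q))$, where $S_{2m}(q)=PSp_{2m}(q)$ is the quotient of $Sp_{2m}(q)$ by its center.
   Context: The covering number $\sigma(G)$ of a group $G$ is the least positive integer $n$ such that $G$ is the union of $n$ proper subgroups, with $\sigma(G)=\infty$ if no finite such union exists. $Sp_{2m}(q)$ is the symplectic group of a nondegenerate alternating form on $\mathbb{F}_q^{2m}$. *)

theory Defs
  imports "Jordan_Normal_Form.Matrix" "HOL-Algebra.Coset" "HOL-Library.Extended_Nat"
begin

definition covering_number :: "('g, 'b) monoid_scheme \<Rightarrow> enat" where
  "covering_number G =
     (if \<exists>n. \<exists>\<H>. finite \<H> \<and> card \<H> = n \<and>
              (\<forall>H\<in>\<H>. subgroup H G \<and> H \<noteq> carrier G) \<and> \<Union>\<H> = carrier G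
      then enat (LEAST n. \<exists>\<H>. finite \<H> \<and> card \<H> = n \<and>
              (\<forall>H\<in>\<H>. subgroup H G \<and> H \<noteq> carrier G) \<and> \<Union>\<H> = carrier G)
      else \<infinity>)"

definition group_center :: "('g, 'b) monoid_scheme \<Rightarrow> 'g set" where
  "group_center G = {z \<in> carrier G. \<forall>g \<in> carrier G. z \<otimes>\<^bsub>G\<^esub> g = g \<otimes>\<^bsub>G\<^esub> z}"

text \<open>Gram matrix of the standard nondegenerate alternating form on K^(2m):
  J = [[0, I_m], [-I_m, 0]].\<close>
definition symp_J :: "nat \<Rightarrow> 'a :: field mat" where
  "symp_J m = mat (2*m) (2*m) (\<lambda>(i,j).
      if i < m \<and> j = i + m then 1
      else if m \<le> i \<and> j + m = i then - 1 else 0)"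

definition Sp :: "nat \<Rightarrow> 'a :: field mat monoid" where
  "Sp m = \<lparr> carrier = {A \<in> carrier_mat (2*m) (2*m).
                         transpose_mat A * symp_J m * A = symp_J m},
            mult = (*), one = 1\<^sub>m (2*m) \<rparr>"

definition PSp :: "nat \<Rightarrow> 'a :: field mat set monoid" where
  "PSp m = Sp m Mod group_center (Sp m)"

end

theory Submission
  imports Defs "Jordan_Normal_Form.Determinant"
begin

text \<open>Covers pull back along \<open>G \<rightarrow> G/N\<close> and push forward to covers of \<open>G/N\<close> by proper
  subgroups as long as \<open>NK = G\<close> forces \<open>N \<subseteq> K\<close>; then \<open>\<sigma>(G) = \<sigma>(G/N)\<close>. For
  \<open>G = Sp(2m)\<close> and \<open>N = Z(G)\<close>: commuting with the transvections \<open>I + E(i, i+m)\<close>,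
  \<open>I + E(i+m, i)\<close> and \<open>I + E(i, j+m) + E(j, i+m)\<close> forces a central matrix to be scalar, so
  \<open>Z(G) = {I, -I}\<close>. Since \<open>-I = J\<^sup>2\<close>, writing \<open>J = zx\<close> with \<open>z\<close> central and \<open>x \<in> K\<close>
  gives \<open>-I = z\<^sup>2x\<^sup>2 = x\<^sup>2 \<in> K\<close>.\<close>

definition proper_cover :: "('g, 'b) monoid_scheme \<Rightarrow> nat \<Rightarrow> bool" where
  "proper_cover G n \<longleftrightarrow> (\<exists>\<H>. finite \<H> \<and> card \<H> = n \<and>
      (\<forall>H\<in>\<H>. subgroup H G \<and> H \<noteq> carrier G) \<and> \<Union>\<H> = carrier G)"

lemma covering_number_eq_Least:
  "covering_number G =
     (if \<exists>n. proper_cover G n then enat (LEAST n. proper_cover G n) else \<infinity>)"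
  unfolding covering_number_def proper_cover_def by simp

lemma covering_number_eqI:
  assumes shrink: "\<And>n. proper_cover G n \<Longrightarrow> \<exists>k\<le>n. proper_cover G' k"
      and lift: "\<And>n. proper_cover G' n \<Longrightarrow> proper_cover G n"
  shows "covering_number G = covering_number G'"
proof (cases "\<exists>n. proper_cover G n")
  case True
  then have ex': "\<exists>n. proper_cover G' n" using shrink by blast
  have "(LEAST n. proper_cover G n) = (LEAST n. proper_cover G' n)"
  proof (rule antisym)
    obtain k where "k \<le> (LEAST n. proper_cover G n)" "proper_cover G' k"
      using shrink[OF LeastI_ex[OF True]] by blast
    then show "(LEAST n. proper_cover G' n) \<le> (LEAST n. proper_cover G n)"
      using Least_le[of "proper_cover G'" k] by linarith
    show "(LEAST n. proper_cover G n) \<le> (LEAST n. proper_cover G' n)"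
      using lift[OF LeastI_ex[OF ex']] by (rule Least_le)
  qed
  then show ?thesis using True ex' by (simp add: covering_number_eq_Least)
next
  case False
  then have "\<nexists>n. proper_cover G' n" using lift by blast
  then show ?thesis using False by (simp add: covering_number_eq_Least)
qed

lemma (in group_hom) subgroup_preimage:
  assumes "subgroup K H"
  shows "subgroup {x \<in> carrier G. h x \<in> K} G"
  using subgroup.m_closed[OF assms] subgroup.one_closed[OF assms] subgroup.m_inv_closed[OF assms]
  by unfold_locales (auto simp: hom_mult hom_inv)

context normal
begin

lemma group_hom_FactGroup: "group_hom G (G Mod H) (\<lambda>a. H #> a)"
  by (simp add: group_hom_def group_hom_axioms_def is_group factorgroup_is_group r_coset_hom_Mod)

lemma FactGroup_image_eq_carrier_imp_set_mult:
  assumes K: "subgroup K G" and onto: "(\<lambda>a. H #> a) ` K = carrier (G Mod H)"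
  shows "H <#> K = carrier G"
proof
  show "H <#> K \<subseteq> carrier G"
    using setmult_subset_G[OF subset subgroup.subset[OF K]] .
  show "carrier G \<subseteq> H <#> K"
  proof
    fix g assume g: "g \<in> carrier G"
    then have "H #> g \<in> (\<lambda>a. H #> a) ` K" unfolding onto by (simp add: carrier_FactGroup)
    then obtain x where x: "x \<in> K" and "H #> g = H #> x" by blast
    then have "g \<in> H #> x" using rcos_self[OF g subgroup_axioms] by simp
    then show "g \<in> H <#> K" using x unfolding r_coset_def set_mult_def by blast
  qed
qed

lemma proper_cover_FactGroup_image:
  assumes supplement: "\<And>K. subgroup K G \<Longrightarrow> H <#> K = carrier G \<Longrightarrow> H \<subseteq> K"
    and cover: "proper_cover G n"
  shows "\<exists>k\<le>n. proper_cover (G Mod H) k"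
proof -
  let ?h = "\<lambda>a. H #> a"
  interpret hom: group_hom G "G Mod H" ?h by (rule group_hom_FactGroup)
  obtain \<K> where \<K>: "finite \<K>" "card \<K> = n" "\<forall>K\<in>\<K>. subgroup K G \<and> K \<noteq> carrier G"
      "\<Union>\<K> = carrier G"
    using cover unfolding proper_cover_def by blast
  have proper: "?h ` K \<noteq> carrier (G Mod H)" if "subgroup K G" "K \<noteq> carrier G" for K
  proof
    assume "?h ` K = carrier (G Mod H)"
    then have HK: "H <#> K = carrier G"
      using FactGroup_image_eq_carrier_imp_set_mult[OF that(1)] by blast
    then have "H <#> K \<subseteq> K"
      using supplement[OF that(1)] subgroup.m_closed[OF that(1)] unfolding set_mult_def by blast
    then show False using HK that subgroup.subset by blast
  qed
  let ?\<Q> = "(\<lambda>K. ?h ` K) ` \<K>"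
  have "proper_cover (G Mod H) (card ?\<Q>)"
    unfolding proper_cover_def
  proof (intro exI conjI ballI)
    fix Q assume "Q \<in> ?\<Q>"
    then obtain K where "K \<in> \<K>" "Q = ?h ` K" by blast
    then show "subgroup Q (G Mod H)" "Q \<noteq> carrier (G Mod H)"
      using \<K>(3) proper hom.subgroup_img_is_subgroup by auto
  next
    have "\<Union>?\<Q> = ?h ` carrier G" by (metis image_Union \<K>(4))
    then show "\<Union>?\<Q> = carrier (G Mod H)" by (simp add: carrier_FactGroup)
  qed (use \<K> in simp_all)
  moreover have "card ?\<Q> \<le> n" using \<K>(2) card_image_le[OF \<K>(1)] by simp
  ultimately show ?thesis by blast
qed

lemma proper_cover_FactGroup_preimage:
  assumes "proper_cover (G Mod H) n"
  shows "proper_cover G n"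
proof -
  let ?h = "\<lambda>a. H #> a"
  interpret hom: group_hom G "G Mod H" ?h by (rule group_hom_FactGroup)
  obtain \<Q> where \<Q>: "finite \<Q>" "card \<Q> = n"
      "\<forall>Q\<in>\<Q>. subgroup Q (G Mod H) \<and> Q \<noteq> carrier (G Mod H)" "\<Union>\<Q> = carrier (G Mod H)"
    using assms unfolding proper_cover_def by blast
  let ?pre = "\<lambda>Q. {x \<in> carrier G. ?h x \<in> Q}"
  have img: "?h ` ?pre Q = Q" if "Q \<in> \<Q>" for Q
  proof -
    have "Q \<subseteq> carrier (G Mod H)" using \<Q>(3) that subgroup.subset by blast
    then show ?thesis unfolding carrier_FactGroup by blast
  qed
  have "inj_on ?pre \<Q>" by (rule inj_onI) (metis img)
  then have "card (?pre ` \<Q>) = n" using \<Q>(2) card_image by blast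
  moreover have "proper_cover G (card (?pre ` \<Q>))"
    unfolding proper_cover_def
  proof (intro exI conjI ballI)
    fix K assume "K \<in> ?pre ` \<Q>"
    then obtain Q where Q: "Q \<in> \<Q>" "K = ?pre Q" by blast
    then have "subgroup Q (G Mod H)" "Q \<noteq> carrier (G Mod H)" using \<Q>(3) by auto
    then show "subgroup K G" using Q hom.subgroup_preimage by simp
    have "?h ` K = Q" using Q img by simp
    then show "K \<noteq> carrier G"
      using \<open>Q \<noteq> carrier (G Mod H)\<close> by (auto simp: carrier_FactGroup)
  next
    show "\<Union>(?pre ` \<Q>) = carrier G" using \<Q>(4) by (auto simp: carrier_FactGroup)
  qed (use \<Q> in simp_all)
  ultimately show ?thesis by simp
qed

end

theorem covering_number_FactGroup:
  assumes "N \<lhd> G"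
    and "\<And>H. subgroup H G \<Longrightarrow> N <#>\<^bsub>G\<^esub> H = carrier G \<Longrightarrow> N \<subseteq> H"
  shows "covering_number G = covering_number (G Mod N)"
  using normal.proper_cover_FactGroup_image[OF assms] normal.proper_cover_FactGroup_preimage[OF assms(1)]
  by (intro covering_number_eqI)

lemma (in group) group_center_subgroup: "subgroup (group_center G) G"
proof
  show "group_center G \<subseteq> carrier G" by (auto simp: group_center_def)
  show "\<one> \<in> group_center G" by (auto simp: group_center_def)
next
  fix x y assume x: "x \<in> group_center G" and y: "y \<in> group_center G"
  have xc: "x \<in> carrier G" and yc: "y \<in> carrier G" using x y by (auto simp: group_center_def)
  show "x \<otimes> y \<in> group_center G" unfolding group_center_def
  proof (intro CollectI conjI ballI)
    show "x \<otimes> y \<in> carrier G" using xc yc by simp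
    fix g assume g: "g \<in> carrier G"
    have xg: "x \<otimes> g = g \<otimes> x" and yg: "y \<otimes> g = g \<otimes> y"
      using x y g by (auto simp: group_center_def)
    have "x \<otimes> y \<otimes> g = x \<otimes> (g \<otimes> y)" using xc yc g by (simp add: m_assoc yg)
    also have "\<dots> = g \<otimes> (x \<otimes> y)" using xc yc g by (simp add: m_assoc[symmetric] xg)
    finally show "x \<otimes> y \<otimes> g = g \<otimes> (x \<otimes> y)" .
  qed
next
  fix x assume x: "x \<in> group_center G"
  have xc: "x \<in> carrier G" using x by (simp add: group_center_def)
  show "inv x \<in> group_center G" unfolding group_center_def
  proof (intro CollectI conjI ballI)
    show "inv x \<in> carrier G" using xc by simp
    fix g assume g: "g \<in> carrier G"
    have xg: "x \<otimes> g = g \<otimes> x" using x g by (auto simp: group_center_def)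
    have "inv x \<otimes> g = inv x \<otimes> (g \<otimes> x) \<otimes> inv x" using xc g by (simp add: m_assoc)
    also have "\<dots> = g \<otimes> inv x" using xc g by (simp add: xg[symmetric] m_assoc[symmetric])
    finally show "inv x \<otimes> g = g \<otimes> inv x" .
  qed
qed

lemma group_center_normal:
  fixes G (structure)
  assumes "group G"
  shows "group_center G \<lhd> G"
proof -
  interpret group G by fact
  show ?thesis unfolding normal_inv_iff
  proof (intro conjI ballI group_center_subgroup)
    fix x z assume x: "x \<in> carrier G" and z: "z \<in> group_center G"
    then have zc: "z \<in> carrier G" and zx: "x \<otimes> z = z \<otimes> x" by (auto simp: group_center_def)
    have "x \<otimes> z \<otimes> inv x = z" using x zc by (simp add: zx m_assoc)
    then show "x \<otimes> z \<otimes> inv x \<in> group_center G" using z by simp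
  qed
qed

lemma (in group) central_involutive_squares_subset_supplement:
  assumes K: "subgroup K G" and supplement: "Z <#> K = carrier G"
    and central: "Z \<subseteq> group_center G"
    and involutive: "\<And>z. z \<in> Z \<Longrightarrow> z \<otimes> z = \<one>"
    and square: "\<And>z. z \<in> Z \<Longrightarrow> \<exists>g\<in>carrier G. g \<otimes> g = z"
  shows "Z \<subseteq> K"
proof
  fix z assume "z \<in> Z"
  then obtain g where g: "g \<in> carrier G" "g \<otimes> g = z" using square by blast
  then obtain y x where y: "y \<in> Z" and x: "x \<in> K" and gyx: "g = y \<otimes> x"
    using supplement unfolding set_mult_def by blast
  have xc: "x \<in> carrier G" using K x subgroup.subset by blast
  have yc: "y \<in> carrier G" and yx: "x \<otimes> y = y \<otimes> x"
    using central y xc unfolding group_center_def by auto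
  have yy: "y \<otimes> y = \<one>" by (rule involutive[OF y])
  have "g \<otimes> g = y \<otimes> (x \<otimes> y) \<otimes> x" using yc xc by (simp add: gyx m_assoc)
  also have "\<dots> = (y \<otimes> y) \<otimes> (x \<otimes> x)" using yc xc by (simp add: yx m_assoc)
  also have "\<dots> = x \<otimes> x" using xc by (simp add: yy)
  finally show "z \<in> K" using g(2) subgroup.m_closed[OF K x x] by simp
qed

definition elem_mat :: "nat \<Rightarrow> nat \<Rightarrow> nat \<Rightarrow> 'a :: semiring_1 mat" where
  "elem_mat n p q = mat n n (\<lambda>(i,j). if i = p \<and> j = q then 1 else 0)"

lemma elem_mat_carrier [simp]: "elem_mat n p q \<in> carrier_mat n n"
  by (simp add: elem_mat_def)

lemma elem_mat_dims [simp]: "dim_row (elem_mat n p q) = n" "dim_col (elem_mat n p q) = n"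
  by (simp_all add: elem_mat_def)

lemma index_elem_mat [simp]:
  "i < n \<Longrightarrow> j < n \<Longrightarrow> elem_mat n p q $$ (i,j) = (if i = p \<and> j = q then 1 else 0)"
  by (simp add: elem_mat_def)

lemma transpose_elem_mat: "transpose_mat (elem_mat n p q) = elem_mat n q p"
  by (rule eq_matI) auto

lemma index_mult_elem_mat_right:
  assumes "A \<in> carrier_mat n n" "p < n" "r < n" "s < n"
  shows "(A * elem_mat n p q) $$ (r,s) = (if s = q then A $$ (r,p) else 0)"
proof -
  have "(A * elem_mat n p q) $$ (r,s) = (\<Sum>k\<in>{0..<n}. A $$ (r,k) * (if k = p \<and> s = q then 1 else 0))"
    using assms by (simp add: scalar_prod_def)
  also have "\<dots> = (\<Sum>k\<in>{0..<n}. if k = p then (if s = q then A $$ (r,k) else 0) else 0)"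
    by (rule sum.cong) auto
  finally show ?thesis using assms by simp
qed

lemma index_mult_elem_mat_left:
  assumes "A \<in> carrier_mat n n" "q < n" "r < n" "s < n"
  shows "(elem_mat n p q * A) $$ (r,s) = (if r = p then A $$ (q,s) else 0)"
proof -
  have "(elem_mat n p q * A) $$ (r,s) = (\<Sum>k\<in>{0..<n}. (if r = p \<and> k = q then 1 else 0) * A $$ (k,s))"
    using assms by (simp add: scalar_prod_def)
  also have "\<dots> = (\<Sum>k\<in>{0..<n}. if k = q then (if r = p then A $$ (k,s) else 0) else 0)"
    by (rule sum.cong) auto
  finally show ?thesis using assms by simp
qed

lemma symp_J_carrier [simp]: "symp_J m \<in> carrier_mat (2*m) (2*m)"
  by (simp add: symp_J_def)

lemma symp_J_dims [simp]: "dim_row (symp_J m) = 2*m" "dim_col (symp_J m) = 2*m"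
  by (simp_all add: symp_J_def)

lemma index_symp_J:
  "i < 2*m \<Longrightarrow> j < 2*m \<Longrightarrow> (symp_J m :: 'a::field mat) $$ (i,j) =
     (if i < m \<and> j = i + m then 1 else if m \<le> i \<and> j + m = i then - 1 else 0)"
  by (simp add: symp_J_def)

lemma transpose_symp_J: "transpose_mat (symp_J m :: 'a::field mat) = - symp_J m"
  by (rule eq_matI) (auto simp: index_symp_J)

lemma symp_J_squared: "(symp_J m :: 'a::field mat) * symp_J m = - 1\<^sub>m (2*m)"
proof (rule eq_matI)
  fix i j assume "i < dim_row (- 1\<^sub>m (2*m) :: 'a mat)" "j < dim_col (- 1\<^sub>m (2*m) :: 'a mat)"
  then have i: "i < 2*m" and j: "j < 2*m" by auto
  have "(symp_J m * symp_J m) $$ (i,j) =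
      (\<Sum>k\<in>{0..<2*m}. (symp_J m :: 'a mat) $$ (i,k) * symp_J m $$ (k,j))"
    using i j by (simp add: scalar_prod_def)
  also have "\<dots> = (\<Sum>k\<in>{0..<2*m}.
      if k = (if i < m then i + m else i - m) then (if i = j then -1 else 0) else 0)"
    by (rule sum.cong) (use i j in \<open>auto simp: index_symp_J\<close>)
  also have "\<dots> = (if i = j then -1 else 0)" using i by auto
  finally show "(symp_J m * symp_J m) $$ (i,j) = (- 1\<^sub>m (2*m) :: 'a mat) $$ (i,j)"
    using i j by simp
qed auto

lemma carrier_Sp:
  "carrier (Sp m) = {A \<in> carrier_mat (2*m) (2*m). transpose_mat A * symp_J m * A = symp_J m}"
  by (simp add: Sp_def)

lemma mult_Sp [simp]: "A \<otimes>\<^bsub>Sp m\<^esub> B = A * B"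
  by (simp add: Sp_def)

lemma one_Sp [simp]: "\<one>\<^bsub>Sp m\<^esub> = 1\<^sub>m (2*m)"
  by (simp add: Sp_def)

lemma transpose_mult_congruence:
  fixes A B J :: "'a::comm_ring_1 mat"
  assumes "A \<in> carrier_mat n n" "B \<in> carrier_mat n n" "J \<in> carrier_mat n n"
  shows "transpose_mat (A * B) * J * (A * B) = transpose_mat B * (transpose_mat A * J * A) * B"
  using assms by (simp add: transpose_mult assoc_mult_mat[of _ n n _ n _ n])

lemma symp_J_in_Sp: "symp_J m \<in> carrier (Sp m :: 'a::field mat monoid)"
proof -
  have "transpose_mat (symp_J m) * symp_J m * symp_J m = - (symp_J m * symp_J m) * (symp_J m :: 'a mat)"
    by (simp add: transpose_symp_J)
  also have "\<dots> = symp_J m" by (simp add: symp_J_squared)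
  finally show ?thesis by (simp add: carrier_Sp)
qed

text \<open>The inverse formula comes from \<open>J\<inverse> = -J\<close>.\<close>
lemma Sp_left_inverse:
  fixes A :: "'a::field mat"
  assumes A: "A \<in> carrier (Sp m)"
  shows "- symp_J m * transpose_mat A * symp_J m \<in> carrier (Sp m)"
    and "- symp_J m * transpose_mat A * symp_J m * A = 1\<^sub>m (2*m)"
proof -
  let ?J = "symp_J m :: 'a mat" and ?B = "- symp_J m * transpose_mat A * symp_J m"
  have Ac: "A \<in> carrier_mat (2*m) (2*m)" and Af: "transpose_mat A * ?J * A = ?J"
    using A by (auto simp: carrier_Sp)
  have Bc: "?B \<in> carrier_mat (2*m) (2*m)"
    by (intro mult_carrier_mat uminus_carrier_mat) (use Ac in auto)
  have "?B * A = - ?J * (transpose_mat A * ?J * A)"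
    using Ac by (simp add: assoc_mult_mat[of _ "2*m" "2*m" _ "2*m" _ "2*m"] del: uminus_mult_left_mat)
  also have "\<dots> = 1\<^sub>m (2*m)" by (simp add: Af symp_J_squared)
  finally show BA: "?B * A = 1\<^sub>m (2*m)" .
  have AB: "A * ?B = 1\<^sub>m (2*m)" by (rule mat_mult_left_right_inverse[OF Bc Ac BA])
  have "transpose_mat ?B * ?J * ?B = transpose_mat (A * ?B) * ?J * (A * ?B)"
    using transpose_mult_congruence[OF Ac Bc symp_J_carrier] Af by simp
  also have "\<dots> = ?J" using AB by simp
  finally show "?B \<in> carrier (Sp m)" using Bc by (simp add: carrier_Sp)
qed

lemma Sp_group: "group (Sp m :: 'a::field mat monoid)"
proof (rule groupI)
  fix A B assume "A \<in> carrier (Sp m :: 'a mat monoid)" "B \<in> carrier (Sp m :: 'a mat monoid)"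
  then have A: "A \<in> carrier_mat (2*m) (2*m)" "transpose_mat A * symp_J m * A = symp_J m"
    and B: "B \<in> carrier_mat (2*m) (2*m)" "transpose_mat B * symp_J m * B = symp_J m"
    by (auto simp: carrier_Sp)
  then show "A \<otimes>\<^bsub>Sp m\<^esub> B \<in> carrier (Sp m)"
    using transpose_mult_congruence[OF A(1) B(1) symp_J_carrier] by (simp add: carrier_Sp)
next
  fix A assume "A \<in> carrier (Sp m :: 'a mat monoid)"
  then show "\<exists>B\<in>carrier (Sp m). B \<otimes>\<^bsub>Sp m\<^esub> A = \<one>\<^bsub>Sp m\<^esub>"
    using Sp_left_inverse by fastforce
qed (auto simp: carrier_Sp)

lemma one_plus_mat_in_Sp:
  fixes N :: "'a::field mat"
  assumes N: "N \<in> carrier_mat (2*m) (2*m)"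
    and form: "\<And>r s. r < 2*m \<Longrightarrow> s < 2*m \<Longrightarrow>
      (symp_J m * N) $$ (r,s) + (transpose_mat N * symp_J m) $$ (r,s)
        + (transpose_mat N * symp_J m * N) $$ (r,s) = 0"
  shows "1\<^sub>m (2*m) + N \<in> carrier (Sp m)"
proof -
  let ?n = "2*m" and ?J = "symp_J m :: 'a mat"
  have I: "1\<^sub>m ?n \<in> carrier_mat ?n ?n" by simp
  have tN: "transpose_mat N \<in> carrier_mat ?n ?n" using N by simp
  have tNJ: "transpose_mat N * ?J \<in> carrier_mat ?n ?n" using tN by simp
  have "transpose_mat (1\<^sub>m ?n + N) * ?J * (1\<^sub>m ?n + N)
      = (1\<^sub>m ?n + transpose_mat N) * ?J * (1\<^sub>m ?n + N)"
    using transpose_add[OF I N] by simp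
  also have "(1\<^sub>m ?n + transpose_mat N) * ?J = ?J + transpose_mat N * ?J"
    using add_mult_distrib_mat[OF I tN symp_J_carrier] by simp
  also have "(?J + transpose_mat N * ?J) * (1\<^sub>m ?n + N)
      = (?J + transpose_mat N * ?J) * 1\<^sub>m ?n + (?J + transpose_mat N * ?J) * N"
    by (rule mult_add_distrib_mat[OF add_carrier_mat[OF tNJ] I N])
  also have "(?J + transpose_mat N * ?J) * N = ?J * N + transpose_mat N * ?J * N"
    by (rule add_mult_distrib_mat[OF symp_J_carrier tNJ N])
  also have "(?J + transpose_mat N * ?J) * 1\<^sub>m ?n = ?J + transpose_mat N * ?J"
    using tNJ by simp
  also have "?J + transpose_mat N * ?J + (?J * N + transpose_mat N * ?J * N) = ?J"
  proof (rule eq_matI)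
    fix i j assume "i < dim_row ?J" "j < dim_col ?J"
    then show "(?J + transpose_mat N * ?J + (?J * N + transpose_mat N * ?J * N)) $$ (i,j) = ?J $$ (i,j)"
      using form[of i j] N by (simp add: algebra_simps)
  qed (use N in auto)
  finally show ?thesis using N by (simp add: carrier_Sp)
qed

lemma elem_mat_mult_symp_J_carrier [simp]:
  "elem_mat (2*m) p q * symp_J m \<in> carrier_mat (2*m) (2*m)"
  by (rule mult_carrier_mat) auto

lemma transvection_upper_in_Sp:
  assumes "i < m"
  shows "1\<^sub>m (2*m) + elem_mat (2*m) i (i+m) \<in> carrier (Sp m :: 'a::field mat monoid)"
  by (rule one_plus_mat_in_Sp) (use assms in \<open>auto simp: transpose_elem_mat
      index_mult_elem_mat_right index_mult_elem_mat_left index_symp_J simp del: index_mult_mat(1)\<close>)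

lemma transvection_lower_in_Sp:
  assumes "i < m"
  shows "1\<^sub>m (2*m) + elem_mat (2*m) (i+m) i \<in> carrier (Sp m :: 'a::field mat monoid)"
  by (rule one_plus_mat_in_Sp) (use assms in \<open>auto simp: transpose_elem_mat
      index_mult_elem_mat_right index_mult_elem_mat_left index_symp_J simp del: index_mult_mat(1)\<close>)

lemma transvection_cross_in_Sp:
  assumes i: "i < m" and j: "j < m" and ij: "i \<noteq> j"
  shows "1\<^sub>m (2*m) + (elem_mat (2*m) i (j+m) + elem_mat (2*m) j (i+m))
    \<in> carrier (Sp m :: 'a::field mat monoid)"
proof (rule one_plus_mat_in_Sp)
  let ?E1 = "elem_mat (2*m) i (j+m) :: 'a mat" and ?E2 = "elem_mat (2*m) j (i+m) :: 'a mat"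
  let ?F1 = "elem_mat (2*m) (j+m) i :: 'a mat" and ?F2 = "elem_mat (2*m) (i+m) j :: 'a mat"
  let ?J = "symp_J m :: 'a mat"
  fix r s assume r: "r < 2*m" and s: "s < 2*m"
  have tr: "transpose_mat (?E1 + ?E2) = ?F1 + ?F2"
    by (simp add: transpose_add[where nr="2*m" and nc="2*m"] transpose_elem_mat)
  have a: "?J * (?E1 + ?E2) = ?J * ?E1 + ?J * ?E2"
    by (rule mult_add_distrib_mat[where n="2*m" and nr="2*m" and nc="2*m"]) auto
  have b: "(?F1 + ?F2) * ?J = ?F1 * ?J + ?F2 * ?J"
    by (rule add_mult_distrib_mat[where n="2*m" and nr="2*m" and nc="2*m"]) auto
  have c1: "(?F1 * ?J + ?F2 * ?J) * (?E1 + ?E2) = ?F1 * ?J * (?E1 + ?E2) + ?F2 * ?J * (?E1 + ?E2)"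
    by (rule add_mult_distrib_mat[where n="2*m" and nr="2*m" and nc="2*m"]) auto
  have c2: "?F1 * ?J * (?E1 + ?E2) = ?F1 * ?J * ?E1 + ?F1 * ?J * ?E2"
    by (rule mult_add_distrib_mat[where n="2*m" and nr="2*m" and nc="2*m"]) auto
  have c3: "?F2 * ?J * (?E1 + ?E2) = ?F2 * ?J * ?E1 + ?F2 * ?J * ?E2"
    by (rule mult_add_distrib_mat[where n="2*m" and nr="2*m" and nc="2*m"]) auto
  have "?J * ?E1 \<in> carrier_mat (2*m) (2*m)" "?J * ?E2 \<in> carrier_mat (2*m) (2*m)"
    "?F1 * ?J * ?E1 \<in> carrier_mat (2*m) (2*m)" "?F1 * ?J * ?E2 \<in> carrier_mat (2*m) (2*m)"
    "?F2 * ?J * ?E1 \<in> carrier_mat (2*m) (2*m)" "?F2 * ?J * ?E2 \<in> carrier_mat (2*m) (2*m)"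
    by (auto intro!: mult_carrier_mat[where n="2*m"])
  then show "(?J * (?E1 + ?E2)) $$ (r,s) + (transpose_mat (?E1 + ?E2) * ?J) $$ (r,s)
      + (transpose_mat (?E1 + ?E2) * ?J * (?E1 + ?E2)) $$ (r,s) = 0"
    unfolding tr a b c1 c2 c3 using i j ij r s
    by (auto simp: index_mult_elem_mat_right index_mult_elem_mat_left index_symp_J
        simp del: index_mult_mat(1))
qed simp

lemma commute_one_plus_mat:
  fixes A N :: "'a::comm_ring_1 mat"
  assumes A: "A \<in> carrier_mat n n" and N: "N \<in> carrier_mat n n"
    and "A * (1\<^sub>m n + N) = (1\<^sub>m n + N) * A"
  shows "A * N = N * A"
proof -
  have sum_eq: "A + A * N = A + N * A"
    using assms mult_add_distrib_mat[OF A one_carrier_mat N] add_mult_distrib_mat[OF one_carrier_mat N A]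
    by simp
  show ?thesis
  proof (rule eq_matI)
    fix i j assume ij: "i < dim_row (N * A)" "j < dim_col (N * A)"
    then have "(A + A * N) $$ (i,j) = (A + N * A) $$ (i,j)" by (simp only: sum_eq)
    then show "(A * N) $$ (i,j) = (N * A) $$ (i,j)" using A N ij by simp
  qed (use A N in auto)
qed

lemma Sp_center_carrier:
  "z \<in> group_center (Sp m :: 'a::field mat monoid) \<Longrightarrow> z \<in> carrier_mat (2*m) (2*m)"
  by (simp add: group_center_def carrier_Sp)

lemma Sp_center_commute:
  fixes z N :: "'a::field mat"
  assumes z: "z \<in> group_center (Sp m)" and N: "N \<in> carrier_mat (2*m) (2*m)"
    and "1\<^sub>m (2*m) + N \<in> carrier (Sp m)"
  shows "z * N = N * z"
proof (rule commute_one_plus_mat[OF _ N])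
  show "z \<in> carrier_mat (2*m) (2*m)" by (rule Sp_center_carrier[OF z])
  show "z * (1\<^sub>m (2*m) + N) = (1\<^sub>m (2*m) + N) * z" using z assms(3) by (simp add: group_center_def)
qed

lemma Sp_center_column_low:
  assumes z: "z \<in> group_center (Sp m :: 'a::field mat monoid)" and i: "i < m" and r: "r < 2*m"
  shows "z $$ (r,i) = (if r = i then z $$ (i+m,i+m) else 0)"
proof -
  have "(z * elem_mat (2*m) i (i+m)) $$ (r,i+m) = (elem_mat (2*m) i (i+m) * z) $$ (r,i+m)"
    using Sp_center_commute[OF z elem_mat_carrier transvection_upper_in_Sp[OF i]] by simp
  then show ?thesis using Sp_center_carrier[OF z] i r
    by (simp add: index_mult_elem_mat_right index_mult_elem_mat_left del: index_mult_mat(1))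
qed

lemma Sp_center_column_high:
  assumes z: "z \<in> group_center (Sp m :: 'a::field mat monoid)" and i: "i < m" and r: "r < 2*m"
  shows "z $$ (r,i+m) = (if r = i+m then z $$ (i,i) else 0)"
proof -
  have "(z * elem_mat (2*m) (i+m) i) $$ (r,i) = (elem_mat (2*m) (i+m) i * z) $$ (r,i)"
    using Sp_center_commute[OF z elem_mat_carrier transvection_lower_in_Sp[OF i]] by simp
  then show ?thesis using Sp_center_carrier[OF z] i r
    by (simp add: index_mult_elem_mat_right index_mult_elem_mat_left del: index_mult_mat(1))
qed

lemma Sp_center_diagonal_cross:
  assumes z: "z \<in> group_center (Sp m :: 'a::field mat monoid)"
    and i: "i < m" and j: "j < m" and ij: "i \<noteq> j"
  shows "z $$ (i,i) = z $$ (j+m,j+m)"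
proof -
  let ?n = "2*m" and ?E1 = "elem_mat (2*m) i (j+m) :: 'a mat" and ?E2 = "elem_mat (2*m) j (i+m) :: 'a mat"
  have zc: "z \<in> carrier_mat ?n ?n" by (rule Sp_center_carrier[OF z])
  have "z * (?E1 + ?E2) = (?E1 + ?E2) * z"
    by (rule Sp_center_commute[OF z _ transvection_cross_in_Sp[OF i j ij]]) simp
  moreover have "z * (?E1 + ?E2) = z * ?E1 + z * ?E2"
    by (rule mult_add_distrib_mat[where nr = ?n and n = ?n and nc = ?n]) (use zc in auto)
  moreover have "(?E1 + ?E2) * z = ?E1 * z + ?E2 * z"
    by (rule add_mult_distrib_mat[where nr = ?n and n = ?n and nc = ?n]) (use zc in auto)
  ultimately have "(z * ?E1 + z * ?E2) $$ (i,j+m) = (?E1 * z + ?E2 * z) $$ (i,j+m)" by simp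
  then show ?thesis using i j ij zc
    by (simp add: index_mult_elem_mat_right index_mult_elem_mat_left del: index_mult_mat(1))
qed

lemma Sp_center_scalar:
  assumes m: "m \<ge> 1" and z: "z \<in> group_center (Sp m :: 'a::field mat monoid)"
  obtains c where "z = c \<cdot>\<^sub>m 1\<^sub>m (2*m)"
proof -
  define c where "c = z $$ (0,0)"
  have low: "z $$ (i,i) = c" if i: "i < m" for i
  proof (cases "i = 0")
    case False
    have "z $$ (0,0) = z $$ (i+m,i+m)"
      by (rule Sp_center_diagonal_cross[OF z]) (use m False i in auto)
    moreover have "z $$ (i,i) = z $$ (i+m,i+m)"
      using Sp_center_column_low[OF z i, of i] i by simp
    ultimately show ?thesis by (simp add: c_def)
  qed (simp add: c_def)
  have entry: "z $$ (r,k) = (if r = k then c else 0)" if r: "r < 2*m" and k: "k < 2*m" for r k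
  proof (cases "k < m")
    case True
    have "z $$ (k+m,k+m) = c"
      using Sp_center_column_low[OF z True, of k] low[OF True] True by simp
    then show ?thesis using Sp_center_column_low[OF z True r] by simp
  next
    case False
    define i where "i = k - m"
    have i: "i < m" and ki: "k = i + m" using False k unfolding i_def by auto
    show ?thesis using Sp_center_column_high[OF z i r] low[OF i] ki by simp
  qed
  have "z = c \<cdot>\<^sub>m 1\<^sub>m (2*m)"
    by (rule eq_matI) (use entry Sp_center_carrier[OF z] in auto)
  then show ?thesis by (rule that)
qed

lemma smult_one_mat_in_SpD:
  assumes m: "m \<ge> 1" and "c \<cdot>\<^sub>m 1\<^sub>m (2*m) \<in> carrier (Sp m :: 'a::field mat monoid)"
  shows "c = 1 \<or> c = -1"
proof -
  let ?n = "2*m" and ?J = "symp_J m :: 'a mat"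
  have I: "1\<^sub>m ?n \<in> carrier_mat ?n ?n" by simp
  have "transpose_mat (c \<cdot>\<^sub>m 1\<^sub>m ?n) = c \<cdot>\<^sub>m 1\<^sub>m ?n" by (rule eq_matI) auto
  then have "?J = (c \<cdot>\<^sub>m 1\<^sub>m ?n) * ?J * (c \<cdot>\<^sub>m 1\<^sub>m ?n)"
    using assms(2) by (simp add: carrier_Sp)
  also have "(c \<cdot>\<^sub>m 1\<^sub>m ?n) * ?J = c \<cdot>\<^sub>m ?J"
    using mult_smult_assoc_mat[OF I symp_J_carrier] by simp
  also have "(c \<cdot>\<^sub>m ?J) * (c \<cdot>\<^sub>m 1\<^sub>m ?n) = c \<cdot>\<^sub>m (c \<cdot>\<^sub>m ?J)"
    using mult_smult_distrib[OF smult_carrier_mat[OF symp_J_carrier] I] by simp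
  finally have "?J $$ (0,m) = (c \<cdot>\<^sub>m (c \<cdot>\<^sub>m ?J)) $$ (0,m)" by simp
  then have "c\<^sup>2 = 1" using m by (simp add: index_symp_J power2_eq_square)
  then show ?thesis by (simp add: power2_eq_1_iff)
qed

lemma group_center_Sp:
  assumes "m \<ge> 1"
  shows "group_center (Sp m :: 'a::field mat monoid) = {1\<^sub>m (2*m), - 1\<^sub>m (2*m)}"
proof
  show "group_center (Sp m :: 'a mat monoid) \<subseteq> {1\<^sub>m (2*m), - 1\<^sub>m (2*m)}"
  proof
    fix z assume z: "z \<in> group_center (Sp m :: 'a mat monoid)"
    obtain c where zc: "z = c \<cdot>\<^sub>m 1\<^sub>m (2*m)" using Sp_center_scalar[OF assms z] .
    have "c = 1 \<or> c = -1"
      by (rule smult_one_mat_in_SpD[OF assms]) (use z zc in \<open>simp add: group_center_def\<close>)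
    then show "z \<in> {1\<^sub>m (2*m), - 1\<^sub>m (2*m)}" unfolding zc by (auto intro!: eq_matI)
  qed
  show "{1\<^sub>m (2*m), - 1\<^sub>m (2*m)} \<subseteq> group_center (Sp m :: 'a mat monoid)"
    by (auto simp: group_center_def carrier_Sp)
qed

lemma Sp_center_involutive_square:
  assumes "m \<ge> 1" and "z \<in> group_center (Sp m :: 'a::field mat monoid)"
  shows "z * z = 1\<^sub>m (2*m)" and "\<exists>g\<in>carrier (Sp m). g * g = z"
proof -
  have z: "z = 1\<^sub>m (2*m) \<or> z = - 1\<^sub>m (2*m)" using assms group_center_Sp by blast
  then show "z * z = 1\<^sub>m (2*m)" by auto
  from z show "\<exists>g\<in>carrier (Sp m :: 'a mat monoid). g * g = z"
  proof
    assume "z = 1\<^sub>m (2*m)"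
    then show ?thesis by (intro bexI[of _ "1\<^sub>m (2*m)"]) (simp_all add: carrier_Sp)
  next
    assume "z = - 1\<^sub>m (2*m)"
    then show ?thesis using symp_J_in_Sp symp_J_squared by metis
  qed
qed

theorem mainTheorem4:
  fixes m :: nat
  assumes "m \<ge> 1"
  shows "covering_number (Sp m :: ('a :: {finite, field}) mat monoid)
         = covering_number (PSp m :: 'a mat set monoid)"
proof -
  let ?G = "Sp m :: 'a mat monoid"
  interpret Sp: group ?G by (rule Sp_group)
  have "covering_number ?G = covering_number (?G Mod group_center ?G)"
  proof (rule covering_number_FactGroup[OF group_center_normal[OF Sp_group]])
    fix H assume "subgroup H ?G" "group_center ?G <#>\<^bsub>?G\<^esub> H = carrier ?G"
    then show "group_center ?G \<subseteq> H"
    proof (rule Sp.central_involutive_squares_subset_supplement)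
      fix z assume "z \<in> group_center ?G"
      then show "z \<otimes>\<^bsub>?G\<^esub> z = \<one>\<^bsub>?G\<^esub>" "\<exists>g\<in>carrier ?G. g \<otimes>\<^bsub>?G\<^esub> g = z"
        using Sp_center_involutive_square[OF assms] by simp_all
    qed simp
  qed
  then show ?thesis by (simp add: PSp_def)
qed

end
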